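(* Let $G$ be a Polish group with a comeager conjugacy class. If $N$ is a normal subgroup of $G$ of index less than $2^{\aleph_0}$, then $N=G$.
   Context: A subset of a Polish space is comeager if it contains a countable intersection of dense open sets. *)

theory Defs
  imports "HOL-Analysis.Analysis" "HOL-Algebra.Algebra"
begin

definition Polish_space :: "'a topology \<Rightarrow> bool" where
  "Polish_space S \<longleftrightarrow> completely_metrizable_space S \<and> separable_space S"

definition topological_group :: "('a, 'b) monoid_scheme \<Rightarrow> 'a topology \<Rightarrow> bool" where
  "topological_group G T \<longleftrightarrow> group G \<and> topspace T = carrier G \<and>
     continuous_map (prod_topology T T) T (\<lambda>(x, y). x \<otimes>\<^bsub>G\<^esub> y) \<and>
     continuous_map T T (\<lambda>x. inv\<^bsub>G\<^esub> x)"

definition Polish_group :: "('a, 'b) monoid_scheme \<Rightarrow> 'a topology \<Rightarrow> bool" where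
  "Polish_group G T \<longleftrightarrow> topological_group G T \<and> Polish_space T"

definition comeager :: "'a topology \<Rightarrow> 'a set \<Rightarrow> bool" where
  "comeager S A \<longleftrightarrow> (\<exists>U :: nat \<Rightarrow> 'a set.
      (\<forall>n. openin S (U n) \<and> S closure_of (U n) = topspace S) \<and> \<Inter> (range U) \<subseteq> A)"

definition conj_class :: "('a, 'b) monoid_scheme \<Rightarrow> 'a \<Rightarrow> 'a set" where
  "conj_class G g = {h \<otimes>\<^bsub>G\<^esub> g \<otimes>\<^bsub>G\<^esub> inv\<^bsub>G\<^esub> h | h. h \<in> carrier G}"

end

theory Submission
  imports Defs
begin

(*
  Let g have comeager conjugacy class C. If g \<notin> N, then C is disjoint from the normal subgroup N.
  Preimages of dense open sets under (x, y) \<mapsto> x y\<^sup>-\<^sup>1 are dense open in G \<times> G, so a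
  Mycielski-type Cantor scheme in a complete metric for G yields points \<phi> s, s \<subseteq> \<nat>, with
  \<phi> s (\<phi> t)\<^sup>-\<^sup>1 \<in> C whenever s \<noteq> t. These lie in pairwise distinct cosets of N, so N would
  have index at least 2\<^sup>\<aleph>\<^sup>0. Hence g \<in> N and N \<supseteq> C is comeager; and a comeager subgroup is
  the whole group, because for every x the comeager sets N and x N meet by Baire's theorem.
*)

lemma topological_groupD:
  assumes "topological_group G T"
  shows "group G" and "topspace T = carrier G"
    and "continuous_map (prod_topology T T) T (\<lambda>(x, y). x \<otimes>\<^bsub>G\<^esub> y)"
    and "continuous_map T T (\<lambda>x. inv\<^bsub>G\<^esub> x)"
  using assms unfolding topological_group_def by auto

lemma continuous_map_left_translation:
  assumes "topological_group G T" and "a \<in> carrier G"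
  shows "continuous_map T T (\<lambda>x. a \<otimes>\<^bsub>G\<^esub> x)"
proof -
  have "continuous_map T (prod_topology T T) (\<lambda>x. (a, x))"
    using assms by (simp add: topological_groupD(2) continuous_map_pairedI)
  from continuous_map_compose[OF this topological_groupD(3)[OF assms(1)]] show ?thesis
    by (simp add: o_def)
qed

lemma continuous_map_right_translation:
  assumes "topological_group G T" and "a \<in> carrier G"
  shows "continuous_map T T (\<lambda>x. x \<otimes>\<^bsub>G\<^esub> a)"
proof -
  have "continuous_map T (prod_topology T T) (\<lambda>x. (x, a))"
    using assms by (simp add: topological_groupD(2) continuous_map_pairedI)
  from continuous_map_compose[OF this topological_groupD(3)[OF assms(1)]] show ?thesis
    by (simp add: o_def)
qed

lemma continuous_map_mult_inv:
  assumes "topological_group G T"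
  shows "continuous_map (prod_topology T T) T (\<lambda>(x, y). x \<otimes>\<^bsub>G\<^esub> inv\<^bsub>G\<^esub> y)"
proof -
  have "continuous_map (prod_topology T T) (prod_topology T T) (\<lambda>p. (fst p, inv\<^bsub>G\<^esub> snd p))"
    using continuous_map_compose[OF continuous_map_snd topological_groupD(4)[OF assms]]
    by (intro continuous_map_pairedI continuous_map_fst) (simp add: o_def)
  from continuous_map_compose[OF this topological_groupD(3)[OF assms]] show ?thesis
    by (simp add: o_def case_prod_beta')
qed

lemma homeomorphic_map_left_translation:
  assumes "topological_group G T" and "a \<in> carrier G"
  shows "homeomorphic_map T T (\<lambda>x. a \<otimes>\<^bsub>G\<^esub> x)"
proof -
  interpret group G by (rule topological_groupD(1)[OF assms(1)])
  show ?thesis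
    unfolding homeomorphic_map_maps homeomorphic_maps_def
    using assms continuous_map_left_translation[OF assms(1)] topological_groupD(2)[OF assms(1)]
    by (intro exI[of _ "\<lambda>x. inv\<^bsub>G\<^esub> a \<otimes>\<^bsub>G\<^esub> x"]) (auto simp: m_assoc[symmetric])
qed

lemma dense_preimage_open_map:
  assumes "open_map S T f" and "T closure_of U = topspace T"
  shows "S closure_of {x \<in> topspace S. f x \<in> U} = topspace S"
  unfolding dense_intersects_open
proof (intro allI impI)
  fix V assume V: "openin S V \<and> V \<noteq> {}"
  then have "openin T (f ` V) \<and> f ` V \<noteq> {}"
    using assms(1) unfolding open_map_def by blast
  then have "U \<inter> f ` V \<noteq> {}"
    using assms(2) unfolding dense_intersects_open by blast
  then show "{x \<in> topspace S. f x \<in> U} \<inter> V \<noteq> {}"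
    using V openin_subset by blast
qed

lemma comeagerE:
  assumes "comeager S A"
  obtains U :: "nat \<Rightarrow> 'a set" where "\<And>n. openin S (U n)" and "\<And>n. S closure_of (U n) = topspace S"
    and "\<Inter> (range U) \<subseteq> A"
  using assms unfolding comeager_def by (elim exE conjE) blast

lemma comeager_mono: "comeager S A \<Longrightarrow> A \<subseteq> B \<Longrightarrow> comeager S B"
  unfolding comeager_def by blast

lemma comeager_preimage_open_map:
  assumes "continuous_map S T f" and "open_map S T f" and "comeager T A"
  shows "comeager S {x \<in> topspace S. f x \<in> A}"
proof -
  obtain U :: "nat \<Rightarrow> 'b set" where U: "\<And>n. openin T (U n)" "\<And>n. T closure_of (U n) = topspace T"
    and UA: "\<Inter> (range U) \<subseteq> A"
    using comeagerE[OF assms(3)] by blast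
  define V where "V n = {x \<in> topspace S. f x \<in> U n}" for n
  have "openin S (V n)" for n
    unfolding V_def using openin_continuous_map_preimage[OF assms(1) U(1)] .
  moreover have "S closure_of (V n) = topspace S" for n
    unfolding V_def using dense_preimage_open_map[OF assms(2) U(2)] .
  moreover have "\<Inter> (range V) \<subseteq> {x \<in> topspace S. f x \<in> A}"
    using UA unfolding V_def by blast
  ultimately show ?thesis
    unfolding comeager_def by blast
qed

lemma comeager_Int_nonempty:
  assumes "completely_metrizable_space S" and "topspace S \<noteq> {}"
    and "comeager S A" and "comeager S B"
  shows "A \<inter> B \<noteq> {}"
proof -
  obtain U :: "nat \<Rightarrow> 'a set" where U: "\<And>n. openin S (U n)" "\<And>n. S closure_of (U n) = topspace S"
    and UA: "\<Inter> (range U) \<subseteq> A"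
    using comeagerE[OF assms(3)] by blast
  obtain V :: "nat \<Rightarrow> 'a set" where V: "\<And>n. openin S (V n)" "\<And>n. S closure_of (V n) = topspace S"
    and VB: "\<Inter> (range V) \<subseteq> B"
    using comeagerE[OF assms(4)] by blast
  have "S closure_of \<Inter> (range U \<union> range V) = topspace S"
    by (rule Baire_category) (use assms(1) U V in auto)
  then obtain x where "x \<in> \<Inter> (range U \<union> range V)"
    using assms(2) by (metis closure_of_empty ex_in_conv)
  then have "x \<in> \<Inter> (range U)" and "x \<in> \<Inter> (range V)"
    by auto
  then show ?thesis
    using UA VB by blast
qed

lemma comeager_decseq:
  assumes "completely_metrizable_space S" and "comeager S A"
  obtains U :: "nat \<Rightarrow> 'a set" where "decseq U" and "\<And>n. openin S (U n)"
    and "\<And>n. S closure_of (U n) = topspace S" and "\<Inter> (range U) \<subseteq> A"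
proof -
  obtain U :: "nat \<Rightarrow> 'a set" where U: "\<And>n. openin S (U n)" "\<And>n. S closure_of (U n) = topspace S"
    and UA: "\<Inter> (range U) \<subseteq> A"
    using comeagerE[OF assms(2)] by blast
  define V where "V n = \<Inter> (U ` {..n})" for n
  show ?thesis
  proof
    show "decseq V"
      unfolding decseq_def V_def by auto
    show "openin S (V n)" for n
      unfolding V_def by (rule openin_Inter) (auto simp: U)
    show "S closure_of (V n) = topspace S" for n
      unfolding V_def by (rule Baire_category) (use assms(1) U in auto)
    show "\<Inter> (range V) \<subseteq> A"
      using UA unfolding V_def by blast
  qed
qed

lemma (in group) comeager_subgroup_eq_carrier:
  assumes tg: "topological_group G T" and "completely_metrizable_space T"
    and "subgroup H G" and "comeager T H"
  shows "H = carrier G"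
proof
  show "H \<subseteq> carrier G"
    using assms(3) by (rule subgroup.subset)
  show "carrier G \<subseteq> H"
  proof
    fix x assume x: "x \<in> carrier G"
    have hm: "homeomorphic_map T T (\<lambda>y. inv x \<otimes> y)"
      using homeomorphic_map_left_translation[OF tg] x by simp
    have "comeager T {y \<in> topspace T. inv x \<otimes> y \<in> H}"
      using homeomorphic_imp_continuous_map[OF hm] homeomorphic_imp_open_map[OF hm] assms(4)
      by (rule comeager_preimage_open_map)
    moreover have "topspace T \<noteq> {}"
      using topological_groupD(2)[OF tg] by auto
    ultimately obtain y where y: "y \<in> H" "y \<in> carrier G" "inv x \<otimes> y \<in> H"
      using comeager_Int_nonempty[OF assms(2) _ assms(4)] topological_groupD(2)[OF tg] by blast
    then have "y \<otimes> inv (inv x \<otimes> y) \<in> H"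
      using subgroup.m_closed[OF assms(3)] subgroup.m_inv_closed[OF assms(3)] by blast
    also have "y \<otimes> inv (inv x \<otimes> y) = y \<otimes> (inv y \<otimes> x)"
      using x y(2) by (simp add: inv_mult_group)
    also have "\<dots> = x"
      using x y(2) by (simp add: m_assoc[symmetric])
    finally show "x \<in> H" .
  qed
qed

lemma dense_open_contains_rectangle:
  assumes "openin (prod_topology S T) D"
    and "prod_topology S T closure_of D = topspace (prod_topology S T)"
    and "openin S V" "V \<noteq> {}" "openin T W" "W \<noteq> {}"
  obtains A B where "openin S A" "openin T B" "A \<noteq> {}" "B \<noteq> {}" "A \<subseteq> V" "B \<subseteq> W"
    "A \<times> B \<subseteq> D"
proof -
  have VW: "openin (prod_topology S T) (V \<times> W)"
    using assms(3,5) by (simp add: openin_prod_Times_iff)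
  then obtain a b where ab: "(a, b) \<in> D \<inter> (V \<times> W)"
    using assms(2,4,6) unfolding dense_intersects_open by blast
  have "openin (prod_topology S T) (D \<inter> (V \<times> W))"
    using assms(1) VW by blast
  then obtain A B where "openin S A" "openin T B" "a \<in> A" "b \<in> B" "A \<times> B \<subseteq> D \<inter> (V \<times> W)"
    using ab unfolding openin_prod_topology_alt by meson
  then show ?thesis
    by (intro that) auto
qed

lemma dense_open_shrink_pairs:
  assumes D: "openin (prod_topology S S) D"
    "prod_topology S S closure_of D = topspace (prod_topology S S)"
    and W: "\<forall>i\<in>I. openin S (W i) \<and> W i \<noteq> {}"
    and "finite P" and "P \<subseteq> {(i, j). i \<in> I \<and> j \<in> I \<and> i \<noteq> j}"
  shows "\<exists>W'. (\<forall>i\<in>I. openin S (W' i) \<and> W' i \<noteq> {} \<and> W' i \<subseteq> W i) \<and>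
      (\<forall>i j. (i, j) \<in> P \<longrightarrow> W' i \<times> W' j \<subseteq> D)"
  using assms(4,5)
proof (induction P rule: finite_induct)
  case empty
  show ?case
    using W by (intro exI[of _ W]) auto
next
  case (insert p P)
  obtain i j where p: "p = (i, j)" and ij: "i \<in> I" "j \<in> I" "i \<noteq> j"
    using insert.prems by auto
  have "P \<subseteq> {(i, j). i \<in> I \<and> j \<in> I \<and> i \<noteq> j}"
    using insert.prems by blast
  from insert.IH[OF this] obtain W'
    where W': "\<forall>i\<in>I. openin S (W' i) \<and> W' i \<noteq> {} \<and> W' i \<subseteq> W i"
    and W'P: "\<forall>i j. (i, j) \<in> P \<longrightarrow> W' i \<times> W' j \<subseteq> D"
    by blast
  have "openin S (W' i)" "W' i \<noteq> {}" "openin S (W' j)" "W' j \<noteq> {}"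
    using W' ij by auto
  then obtain A B where AB: "openin S A" "openin S B" "A \<noteq> {}" "B \<noteq> {}" "A \<subseteq> W' i"
    "B \<subseteq> W' j" "A \<times> B \<subseteq> D"
    by (rule dense_open_contains_rectangle[OF D])
  define W'' where "W'' = W'(i := A, j := B)"
  have sub: "W'' k \<subseteq> W' k" for k
    using AB ij unfolding W''_def by auto
  have "\<forall>k\<in>I. openin S (W'' k) \<and> W'' k \<noteq> {} \<and> W'' k \<subseteq> W k"
    using W' AB sub unfolding W''_def by auto
  moreover have "\<forall>k l. (k, l) \<in> insert p P \<longrightarrow> W'' k \<times> W'' l \<subseteq> D"
  proof (intro allI impI)
    fix k l assume kl: "(k, l) \<in> insert p P"
    show "W'' k \<times> W'' l \<subseteq> D"
    proof (cases "(k, l) = p")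
      case True
      then show ?thesis
        using AB ij unfolding p W''_def by auto
    next
      case False
      then have "W' k \<times> W' l \<subseteq> D"
        using kl W'P by auto
      then show ?thesis
        using sub by blast
    qed
  qed
  ultimately show ?case
    by (intro exI[of _ W''] conjI)
qed

lemma dense_open_shrink_family:
  assumes D: "openin (prod_topology S S) D"
    "prod_topology S S closure_of D = topspace (prod_topology S S)"
    and "finite I" and W: "\<And>i. i \<in> I \<Longrightarrow> openin S (W i) \<and> W i \<noteq> {}"
  obtains W' where "\<And>i. i \<in> I \<Longrightarrow> openin S (W' i) \<and> W' i \<noteq> {} \<and> W' i \<subseteq> W i"
    and "\<And>i j. i \<in> I \<Longrightarrow> j \<in> I \<Longrightarrow> i \<noteq> j \<Longrightarrow> W' i \<times> W' j \<subseteq> D"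
proof -
  have fin: "finite {(i, j). i \<in> I \<and> j \<in> I \<and> i \<noteq> j}"
    by (rule finite_subset[of _ "I \<times> I"]) (use assms(3) in auto)
  have "\<forall>i\<in>I. openin S (W i) \<and> W i \<noteq> {}"
    using W by blast
  from dense_open_shrink_pairs[OF D this fin order_refl] show ?thesis
  proof (elim exE conjE)
    fix W' assume "\<forall>i\<in>I. openin S (W' i) \<and> W' i \<noteq> {} \<and> W' i \<subseteq> W i"
      and "\<forall>i j. (i, j) \<in> {(i, j). i \<in> I \<and> j \<in> I \<and> i \<noteq> j} \<longrightarrow> W' i \<times> W' j \<subseteq> D"
    then show ?thesis
      using that[of W'] by auto
  qed
qed

context Metric_space
begin

lemma openin_contains_small_mcball:
  assumes "openin mtopology W" "W \<noteq> {}" "0 < e"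
  obtains c r where "c \<in> M" "0 < r" "r < e" "mcball c r \<subseteq> W"
proof -
  obtain c where "c \<in> W"
    using assms(2) by blast
  then obtain r where r: "0 < r" "mball c r \<subseteq> W" "c \<in> M"
    using assms(1) unfolding openin_mtopology by blast
  show ?thesis
  proof
    show "c \<in> M" "0 < min (r/2) (e/2)" "min (r/2) (e/2) < e"
      using r assms(3) by auto
    have "mcball c (min (r/2) (e/2)) \<subseteq> mball c r"
      using r by (intro mcball_subset_mball_concentric) simp
    then show "mcball c (min (r/2) (e/2)) \<subseteq> W"
      using r(2) by blast
  qed
qed

lemma mcomplete_nested_mcballs:
  assumes "mcomplete" and "\<And>n. V n \<noteq> {}"
    and "\<And>n. \<exists>c r. r < 1 / Suc n \<and> V (Suc n) \<subseteq> mcball c r \<and> mcball c r \<subseteq> V n"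
  obtains p where "p \<in> M" and "\<And>n. p \<in> V n"
proof -
  obtain c r where cr: "\<And>n. r n < 1 / Suc n" "\<And>n. V (Suc n) \<subseteq> mcball (c n) (r n)"
    "\<And>n. mcball (c n) (r n) \<subseteq> V n"
    using assms(3) by metis
  define K where "K n = mtopology closure_of (V (Suc n))" for n
  have VK: "V (Suc n) \<subseteq> K n" for n
  proof -
    have "V (Suc n) \<subseteq> M"
      using cr(2)[of n] mcball_subset_mspace by blast
    then show ?thesis
      unfolding K_def by (simp add: closure_of_subset)
  qed
  have KB: "K n \<subseteq> mcball (c n) (r n)" for n
    unfolding K_def using cr(2) by (intro closure_of_minimal) auto
  have "closedin mtopology (K n)" for n
    unfolding K_def by simp
  moreover have "K n \<noteq> {}" for n
    using VK assms(2) by blast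
  moreover have "decseq K"
    using VK KB cr(3) by (intro decseq_SucI) blast
  moreover have "\<exists>n a. K n \<subseteq> mcball a e" if "0 < e" for e
  proof -
    obtain n where "1 / Suc n < e"
      using \<open>0 < e\<close> by (metis inverse_eq_divide reals_Archimedean)
    then have "mcball (c n) (r n) \<subseteq> mcball (c n) e"
      using cr(1)[of n] by (intro mcball_subset_concentric) linarith
    then show ?thesis
      using KB by blast
  qed
  ultimately have "\<Inter> (range K) \<noteq> {}"
    using assms(1) unfolding mcomplete_nest by blast
  then obtain p where p: "\<And>n. p \<in> K n"
    by blast
  show ?thesis
  proof
    show "p \<in> M"
      using KB p mcball_subset_mspace by blast
    show "p \<in> V n" for n
      using KB p cr(3) by blast
  qed
qed

lemma shrink_family_into_small_mballs:
  assumes D: "openin (prod_topology mtopology mtopology) D"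
      "prod_topology mtopology mtopology closure_of D = topspace (prod_topology mtopology mtopology)"
    and "finite I" and W: "\<And>i. i \<in> I \<Longrightarrow> openin mtopology (W i) \<and> W i \<noteq> {}"
    and "0 < e"
  obtains W' where "\<And>i. i \<in> I \<Longrightarrow> openin mtopology (W' i) \<and> W' i \<noteq> {}"
    and "\<And>i. i \<in> I \<Longrightarrow> \<exists>c r. r < e \<and> W' i \<subseteq> mcball c r \<and> mcball c r \<subseteq> W i"
    and "\<And>i j. i \<in> I \<Longrightarrow> j \<in> I \<Longrightarrow> i \<noteq> j \<Longrightarrow> W' i \<times> W' j \<subseteq> D"
proof -
  obtain W1 where W1: "\<And>i. i \<in> I \<Longrightarrow> openin mtopology (W1 i) \<and> W1 i \<noteq> {} \<and> W1 i \<subseteq> W i"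
    and W1D: "\<And>i j. i \<in> I \<Longrightarrow> j \<in> I \<Longrightarrow> i \<noteq> j \<Longrightarrow> W1 i \<times> W1 j \<subseteq> D"
    using dense_open_shrink_family[OF D assms(3), where W = W] W by blast
  have "\<exists>c r. c \<in> M \<and> 0 < r \<and> r < e \<and> mcball c r \<subseteq> W1 i" if "i \<in> I" for i
  proof -
    have "openin mtopology (W1 i)" "W1 i \<noteq> {}"
      using W1[OF that] by auto
    then obtain c r where "c \<in> M" "0 < r" "r < e" "mcball c r \<subseteq> W1 i"
      using openin_contains_small_mcball assms(5) by blast
    then show ?thesis
      by blast
  qed
  then obtain c r where cr: "\<And>i. i \<in> I \<Longrightarrow> c i \<in> M \<and> 0 < r i \<and> r i < e \<and> mcball (c i) (r i) \<subseteq> W1 i"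
    by metis
  have ball_W1: "mball (c i) (r i) \<subseteq> W1 i" if "i \<in> I" for i
    using cr[OF that] mball_subset_mcball by blast
  show ?thesis
  proof (rule that[of "\<lambda>i. mball (c i) (r i)"])
    show "openin mtopology (mball (c i) (r i)) \<and> mball (c i) (r i) \<noteq> {}" if "i \<in> I" for i
      using cr[OF that] centre_in_mball_iff by blast
    show "\<exists>c' r'. r' < e \<and> mball (c i) (r i) \<subseteq> mcball c' r' \<and> mcball c' r' \<subseteq> W i" if "i \<in> I" for i
      using cr[OF that] W1[OF that] mball_subset_mcball by blast
    show "mball (c i) (r i) \<times> mball (c j) (r j) \<subseteq> D" if "i \<in> I" "j \<in> I" "i \<noteq> j" for i j
      using W1D[OF that] ball_W1[OF that(1)] ball_W1[OF that(2)] by blast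
  qed
qed

lemma dense_open_Cantor_scheme:
  assumes "M \<noteq> {}"
    and D: "\<And>n. openin (prod_topology mtopology mtopology) (D n)"
      "\<And>n. prod_topology mtopology mtopology closure_of (D n) = topspace (prod_topology mtopology mtopology)"
  obtains S :: "nat \<Rightarrow> bool list \<Rightarrow> 'a set"
  where "\<And>n \<tau>. length \<tau> = n \<Longrightarrow> S n \<tau> \<noteq> {}"
    and "\<And>n \<tau>. length \<tau> = Suc n \<Longrightarrow>
      \<exists>c r. r < 1 / Suc n \<and> S (Suc n) \<tau> \<subseteq> mcball c r \<and> mcball c r \<subseteq> S n (butlast \<tau>)"
    and "\<And>n \<tau> \<tau>'. length \<tau> = Suc n \<Longrightarrow> length \<tau>' = Suc n \<Longrightarrow> \<tau> \<noteq> \<tau>' \<Longrightarrow>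
      S (Suc n) \<tau> \<times> S (Suc n) \<tau>' \<subseteq> D n"
proof -
  define level :: "nat \<Rightarrow> (bool list \<Rightarrow> 'a set) \<Rightarrow> bool" where
    "level n W \<longleftrightarrow> (\<forall>\<tau>. length \<tau> = n \<longrightarrow> openin mtopology (W \<tau>) \<and> W \<tau> \<noteq> {})" for n W
  define refines :: "nat \<Rightarrow> (bool list \<Rightarrow> 'a set) \<Rightarrow> (bool list \<Rightarrow> 'a set) \<Rightarrow> bool" where
    "refines n W W' \<longleftrightarrow>
      (\<forall>\<tau>. length \<tau> = Suc n \<longrightarrow>
         (\<exists>c r. r < 1 / Suc n \<and> W' \<tau> \<subseteq> mcball c r \<and> mcball c r \<subseteq> W (butlast \<tau>))) \<and>
      (\<forall>\<tau> \<tau>'. length \<tau> = Suc n \<longrightarrow> length \<tau>' = Suc n \<longrightarrow> \<tau> \<noteq> \<tau>' \<longrightarrow> W' \<tau> \<times> W' \<tau>' \<subseteq> D n)"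
    for n W W'
  have "level 0 (\<lambda>_. M)"
    using assms(1) unfolding level_def by simp
  moreover have "\<exists>W'. level (Suc n) W' \<and> refines n W W'" if "level n W" for n W
  proof -
    let ?I = "{\<tau> :: bool list. length \<tau> = Suc n}"
    have "finite ?I"
      using finite_lists_length_eq[of "UNIV :: bool set" "Suc n"] by simp
    moreover have "openin mtopology (W (butlast \<tau>)) \<and> W (butlast \<tau>) \<noteq> {}" if "\<tau> \<in> ?I" for \<tau>
      using \<open>level n W\<close> that unfolding level_def by simp
    ultimately show ?thesis
    proof (rule shrink_family_into_small_mballs[OF D(1,2), where W = "\<lambda>\<tau>. W (butlast \<tau>)"])
      show "0 < 1 / real (Suc n)"
        by simp
      fix W' assume "\<And>\<tau>. \<tau> \<in> ?I \<Longrightarrow> openin mtopology (W' \<tau>) \<and> W' \<tau> \<noteq> {}"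
        and "\<And>\<tau>. \<tau> \<in> ?I \<Longrightarrow>
          \<exists>c r. r < 1 / Suc n \<and> W' \<tau> \<subseteq> mcball c r \<and> mcball c r \<subseteq> W (butlast \<tau>)"
        and "\<And>\<tau> \<tau>'. \<tau> \<in> ?I \<Longrightarrow> \<tau>' \<in> ?I \<Longrightarrow> \<tau> \<noteq> \<tau>' \<Longrightarrow> W' \<tau> \<times> W' \<tau>' \<subseteq> D n"
      then show ?thesis
        unfolding level_def refines_def by (intro exI[of _ W']) auto
    qed
  qed
  ultimately obtain S where "\<And>n. level n (S n)" and "\<And>n. refines n (S n) (S (Suc n))"
    using dependent_nat_choice[of level refines] by metis
  then show ?thesis
    using that[of S] unfolding level_def refines_def by blast
qed

lemma mcomplete_Mycielski:
  assumes "mcomplete" and "M \<noteq> {}" and "decseq D"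
    and D: "\<And>n. openin (prod_topology mtopology mtopology) (D n)"
      "\<And>n. prod_topology mtopology mtopology closure_of (D n) = topspace (prod_topology mtopology mtopology)"
  obtains \<phi> :: "nat set \<Rightarrow> 'a" where "\<And>s. \<phi> s \<in> M" and "\<And>s t n. s \<noteq> t \<Longrightarrow> (\<phi> s, \<phi> t) \<in> D n"
proof (rule dense_open_Cantor_scheme[OF assms(2) D])
  fix S :: "nat \<Rightarrow> bool list \<Rightarrow> 'a set"
  assume S_ne: "\<And>n \<tau>. length \<tau> = n \<Longrightarrow> S n \<tau> \<noteq> {}"
    and S_nested: "\<And>n \<tau>. length \<tau> = Suc n \<Longrightarrow>
      \<exists>c r. r < 1 / Suc n \<and> S (Suc n) \<tau> \<subseteq> mcball c r \<and> mcball c r \<subseteq> S n (butlast \<tau>)"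
    and S_D: "\<And>n \<tau> \<tau>'. length \<tau> = Suc n \<Longrightarrow> length \<tau>' = Suc n \<Longrightarrow> \<tau> \<noteq> \<tau>' \<Longrightarrow>
      S (Suc n) \<tau> \<times> S (Suc n) \<tau>' \<subseteq> D n"
  define branch :: "nat set \<Rightarrow> nat \<Rightarrow> bool list" where
    "branch s n = map (\<lambda>i. i \<in> s) [0..<n]" for s n
  have branch_length: "length (branch s n) = n" for s n
    unfolding branch_def by simp
  have branch_butlast: "butlast (branch s (Suc n)) = branch s n" for s n
    unfolding branch_def by simp
  have "\<exists>p. p \<in> M \<and> (\<forall>n. p \<in> S n (branch s n))" for s
  proof (rule mcomplete_nested_mcballs[where V = "\<lambda>n. S n (branch s n)", OF assms(1)])
    show "S n (branch s n) \<noteq> {}" for n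
      using S_ne branch_length by blast
    show "\<exists>c r. r < 1 / Suc n \<and> S (Suc n) (branch s (Suc n)) \<subseteq> mcball c r \<and>
        mcball c r \<subseteq> S n (branch s n)" for n
      using S_nested[OF branch_length] unfolding branch_butlast .
  qed blast
  then obtain \<phi> where \<phi>: "\<And>s. \<phi> s \<in> M" "\<And>s n. \<phi> s \<in> S n (branch s n)"
    by metis
  show ?thesis
  proof (rule that)
    show "\<phi> s \<in> M" for s
      by (rule \<phi>(1))
    show "(\<phi> s, \<phi> t) \<in> D n" if "s \<noteq> t" for s t n
    proof -
      obtain m where m: "(m \<in> s) \<noteq> (m \<in> t)"
        using \<open>s \<noteq> t\<close> by blast
      define k where "k = max n m"
      have "branch s (Suc k) ! m \<noteq> branch t (Suc k) ! m"
        using m unfolding branch_def k_def by (simp del: upt_Suc add: less_Suc_eq_le)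
      then have "S (Suc k) (branch s (Suc k)) \<times> S (Suc k) (branch t (Suc k)) \<subseteq> D k"
        using S_D branch_length by metis
      moreover have "D k \<subseteq> D n"
        using \<open>decseq D\<close> unfolding k_def decseq_def by simp
      ultimately show ?thesis
        using \<phi>(2) by blast
    qed
  qed
qed

end

lemma (in group) dense_preimage_mult_inv:
  assumes tg: "topological_group G T" and U: "T closure_of U = topspace T"
  shows "prod_topology T T closure_of {p \<in> topspace (prod_topology T T). (\<lambda>(x, y). x \<otimes> inv y) p \<in> U}
    = topspace (prod_topology T T)"
  unfolding dense_intersects_open
proof (intro allI impI)
  have top: "topspace T = carrier G"
    by (rule topological_groupD(2)[OF tg])
  fix O' assume O': "openin (prod_topology T T) O' \<and> O' \<noteq> {}"
  then obtain a b where "(a, b) \<in> O'"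
    by auto
  then obtain V W where VW: "openin T V" "openin T W" "a \<in> V" "b \<in> W" "V \<times> W \<subseteq> O'"
    using O' unfolding openin_prod_topology_alt by meson
  have ab: "a \<in> carrier G" "b \<in> carrier G"
    using VW openin_subset top by blast+
  define R where "R = {y \<in> topspace T. y \<otimes> b \<in> V}"
  have "openin T R"
    unfolding R_def using continuous_map_right_translation[OF tg ab(2)] VW(1)
    by (rule openin_continuous_map_preimage)
  moreover have "a \<otimes> inv b \<in> R"
    unfolding R_def using ab VW(3) top by (simp add: m_assoc)
  ultimately obtain y where y: "y \<in> U" "y \<in> R"
    using U unfolding dense_intersects_open by blast
  then have yb: "y \<in> carrier G" "y \<otimes> b \<in> V"
    unfolding R_def using top by auto
  have "(y \<otimes> b) \<otimes> inv b = y"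
    using yb ab by (simp add: m_assoc)
  then have "(y \<otimes> b, b) \<in> {p \<in> topspace (prod_topology T T). (\<lambda>(x, y). x \<otimes> inv y) p \<in> U}"
    using y(1) yb ab top by (simp add: topspace_prod_topology)
  moreover have "(y \<otimes> b, b) \<in> O'"
    using VW yb by blast
  ultimately show "{p \<in> topspace (prod_topology T T). (\<lambda>(x, y). x \<otimes> inv y) p \<in> U} \<inter> O' \<noteq> {}"
    by blast
qed

lemma (in group) comeager_continuum_mult_inv_family:
  assumes tg: "topological_group G T" and "completely_metrizable_space T" and "comeager T A"
  obtains \<phi> :: "nat set \<Rightarrow> 'a" where "\<And>s. \<phi> s \<in> carrier G"
    and "\<And>s t. s \<noteq> t \<Longrightarrow> \<phi> s \<otimes> inv \<phi> t \<in> A"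
proof -
  obtain U where U: "decseq U" "\<And>n. openin T (U n)" "\<And>n. T closure_of (U n) = topspace T"
    and UA: "\<Inter> (range U) \<subseteq> A"
    using comeager_decseq[OF assms(2,3)] by blast
  define D where "D n = {p \<in> topspace (prod_topology T T). (\<lambda>(x, y). x \<otimes> inv y) p \<in> U n}" for n
  have "decseq D"
    using U(1) unfolding D_def decseq_def by blast
  have D_open: "openin (prod_topology T T) (D n)" for n
    unfolding D_def using continuous_map_mult_inv[OF tg] U(2)
    by (rule openin_continuous_map_preimage)
  have D_dense: "prod_topology T T closure_of (D n) = topspace (prod_topology T T)" for n
    unfolding D_def using tg U(3) by (rule dense_preimage_mult_inv)
  obtain M d where Md: "Metric_space M d" "Metric_space.mcomplete M d" "T = Metric_space.mtopology M d"
    using assms(2) unfolding completely_metrizable_space_def by blast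
  interpret Metric_space M d
    by (fact Md(1))
  have "M = carrier G"
    using topological_groupD(2)[OF tg] Md(3) by simp
  then have "M \<noteq> {}"
    using one_closed by blast
  show ?thesis
  proof (rule mcomplete_Mycielski[OF Md(2) \<open>M \<noteq> {}\<close> \<open>decseq D\<close>])
    show "openin (prod_topology mtopology mtopology) (D n)" for n
      using D_open Md(3) by simp
    show "prod_topology mtopology mtopology closure_of (D n) = topspace (prod_topology mtopology mtopology)" for n
      using D_dense Md(3) by simp
    fix \<phi> :: "nat set \<Rightarrow> 'a"
    assume \<phi>M: "\<And>s. \<phi> s \<in> M" and \<phi>D: "\<And>s t n. s \<noteq> t \<Longrightarrow> (\<phi> s, \<phi> t) \<in> D n"
    show thesis
    proof (rule that[of \<phi>])
      show "\<phi> s \<in> carrier G" for s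
        using \<phi>M \<open>M = carrier G\<close> by blast
      show "\<phi> s \<otimes> inv \<phi> t \<in> A" if "s \<noteq> t" for s t
      proof -
        have "\<phi> s \<otimes> inv \<phi> t \<in> U n" for n
          using \<phi>D[OF that, of n] unfolding D_def by simp
        then show ?thesis
          using UA by blast
      qed
    qed
  qed
qed

lemma (in normal) conj_class_subset:
  assumes "g \<in> H"
  shows "conj_class G g \<subseteq> H"
  using assms inv_op_closed2 unfolding conj_class_def by blast

lemma (in normal) conj_class_mem_imp_mem:
  assumes "g \<in> carrier G" and "x \<in> conj_class G g" and "x \<in> H"
  shows "g \<in> H"
proof -
  obtain h where h: "h \<in> carrier G" "x = h \<otimes> g \<otimes> inv h"
    using assms(2) unfolding conj_class_def by blast
  then have "inv h \<otimes> x \<otimes> h \<in> H"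
    using assms(3) inv_op_closed1 by blast
  also have "inv h \<otimes> x \<otimes> h = g"
    using h assms(1) by (simp add: m_assoc[symmetric]) (simp add: m_assoc)
  finally show ?thesis .
qed

lemma (in group) card_of_ordLeq_rcosets:
  assumes "subgroup H G" and "\<And>s. s \<in> S \<Longrightarrow> \<phi> s \<in> carrier G"
    and "\<And>s t. s \<in> S \<Longrightarrow> t \<in> S \<Longrightarrow> s \<noteq> t \<Longrightarrow> \<phi> s \<otimes> inv \<phi> t \<notin> H"
  shows "|S| \<le>o |rcosets H|"
proof -
  have "inj_on (\<lambda>s. H #> \<phi> s) S"
  proof (rule inj_onI, rule ccontr)
    fix s t assume st: "s \<in> S" "t \<in> S" "H #> \<phi> s = H #> \<phi> t" "s \<noteq> t"
    have "\<phi> s \<in> H #> \<phi> t"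
      using st(3) rcos_self[OF assms(2)[OF st(1)] assms(1)] by simp
    then have "\<phi> s \<otimes> inv \<phi> t \<in> H"
      using subgroup.rcos_module_imp[OF assms(1) is_group assms(2)[OF st(2)]] by blast
    then show False
      using assms(3) st by blast
  qed
  moreover have "(\<lambda>s. H #> \<phi> s) ` S \<subseteq> rcosets H"
    using rcosetsI[OF subgroup.subset[OF assms(1)]] assms(2) by blast
  ultimately show ?thesis
    using card_of_ordLeq by blast
qed

theorem lemma6p4:
  fixes G :: "('a, 'b) monoid_scheme" and T :: "'a topology" and N :: "'a set"
  assumes "Polish_group G T"
    and "\<exists>g \<in> carrier G. comeager T (conj_class G g)"
    and "N \<lhd> G"
    and "(card_of (rcosets\<^bsub>G\<^esub> N), card_of (UNIV :: nat set set)) \<in> ordLess"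
  shows "N = carrier G"
proof -
  have tg: "topological_group G T" and cms: "completely_metrizable_space T"
    using assms(1) unfolding Polish_group_def Polish_space_def by auto
  interpret normal N G
    by (fact assms(3))
  obtain g where g: "g \<in> carrier G" "comeager T (conj_class G g)"
    using assms(2) by blast
  have "g \<in> N"
  proof (rule ccontr)
    assume "g \<notin> N"
    obtain \<phi> :: "nat set \<Rightarrow> 'a" where "\<And>s. \<phi> s \<in> carrier G"
      and \<phi>_conj: "\<And>s t. s \<noteq> t \<Longrightarrow> \<phi> s \<otimes>\<^bsub>G\<^esub> inv\<^bsub>G\<^esub> \<phi> t \<in> conj_class G g"
      using comeager_continuum_mult_inv_family[OF tg cms g(2)] by blast
    have "|UNIV :: nat set set| \<le>o |rcosets\<^bsub>G\<^esub> N|"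
    proof (rule card_of_ordLeq_rcosets[OF normal_imp_subgroup[OF assms(3)], where \<phi> = \<phi>])
      show "\<phi> s \<in> carrier G" for s
        by fact
      show "\<phi> s \<otimes>\<^bsub>G\<^esub> inv\<^bsub>G\<^esub> \<phi> t \<notin> N" if "s \<noteq> t" for s t
        using conj_class_mem_imp_mem[OF g(1) \<phi>_conj[OF that]] \<open>g \<notin> N\<close> by blast
    qed
    then show False
      using assms(4) not_ordLess_ordLeq by blast
  qed
  then have "comeager T N"
    using comeager_mono[OF g(2) conj_class_subset] by blast
  then show ?thesis
    using comeager_subgroup_eq_carrier[OF tg cms normal_imp_subgroup[OF assms(3)]] by blast
qed

end
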